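(* In the Core Tuplix Calculus $\mathbf{CTC}$ over a nonempty attribute set $A$ and a non-trivial cancellation meadow $\mathcal{D}$ (defined in the context), for data variables $u,v$ the identity \[ \gamma(u)\oplus\gamma(u-v)=\gamma(v)\oplus\gamma(u-v) \] is derivable.
   Context: Data: a meadow is a commutative ring with unit with a total unary operation $(\cdot)^{-1}$ satisfying $(u^{-1})^{-1}=u$ and $u\cdot(u\cdot u^{-1})=u$; a non-trivial cancellation meadow additionally satisfies $0\neq 1$ and the cancellation law ($u\neq 0$ and $uv=uw$ imply $v=w$). Fix such a structure $\mathcal{D}$. Data terms are built from data variables, constants $0,1$, binary $+,\cdot$ and unary $-$, $(\cdot)^{-1}$; write $p/q$ for $p\cdot q^{-1}$ and $p-q$ for $p+(-q)$. Fix a nonempty set $A$ of attributes. Tuplix terms are built from tuplix variables, constants $\epsilon$ and $\delta$, entries $a(p)$ ($a\in A$, $p$ a data term), zero tests $\gamma(p)$, and the binary operator $\oplus$. $\mathbf{CTC}$ is the two-sorted equational proof system with axioms (T1) $x\oplus y=y\oplus x$; (T2) $(x\oplus y)\oplus z=x\oplus(y\oplus z)$; (T3) $x\oplus\epsilon=x$; (T4) $x\oplus\delta=\delta$; (T5) $a(u)\oplus a(v)=a(u+v)$; (T6) $\gamma(u)=\gamma(u/u)$; (T7) $\gamma(0)=\epsilon$; (T8) $\gamma(1)=\delta$; (T9) $\gamma(u)\oplus\gamma(v)=\gamma(u/u+v/v)$; (T10) $\gamma(u-v)\oplus a(u)=\gamma(u-v)\oplus a(v)$ (for all $a\in A$),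 together with the rule (DE): for all data terms $p,q$, if $\mathcal{D}\models p=q$ then $\gamma(p)=\gamma(q)$ is derivable. *)

theory Defs
  imports Main
begin

record 'd meadow =
  mzero :: 'd
  mone  :: 'd
  madd  :: "'d \<Rightarrow> 'd \<Rightarrow> 'd"
  mmul  :: "'d \<Rightarrow> 'd \<Rightarrow> 'd"
  mneg  :: "'d \<Rightarrow> 'd"
  minv  :: "'d \<Rightarrow> 'd"

definition is_meadow :: "'d meadow \<Rightarrow> bool" where
  "is_meadow D \<longleftrightarrow>
     (\<forall>x y z. madd D (madd D x y) z = madd D x (madd D y z)) \<and>
     (\<forall>x y. madd D x y = madd D y x) \<and>
     (\<forall>x. madd D x (mzero D) = x) \<and>
     (\<forall>x. madd D x (mneg D x) = mzero D) \<and>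
     (\<forall>x y z. mmul D (mmul D x y) z = mmul D x (mmul D y z)) \<and>
     (\<forall>x y. mmul D x y = mmul D y x) \<and>
     (\<forall>x. mmul D x (mone D) = x) \<and>
     (\<forall>x y z. mmul D x (madd D y z) = madd D (mmul D x y) (mmul D x z)) \<and>
     (\<forall>x. minv D (minv D x) = x) \<and>
     (\<forall>x. mmul D x (mmul D x (minv D x)) = x)"

definition nontrivial_cancellation_meadow :: "'d meadow \<Rightarrow> bool" where
  "nontrivial_cancellation_meadow D \<longleftrightarrow>
     is_meadow D \<and> mzero D \<noteq> mone D \<and>
     (\<forall>x y z. x \<noteq> mzero D \<longrightarrow> mmul D x y = mmul D x z \<longrightarrow> y = z)"

datatype dterm =
    DVar nat
  | DZero
  | DOne
  | DPlus dterm dterm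
  | DTimes dterm dterm
  | DNeg dterm
  | DInv dterm

definition DDiv :: "dterm \<Rightarrow> dterm \<Rightarrow> dterm" where
  "DDiv p q = DTimes p (DInv q)"

definition DMinus :: "dterm \<Rightarrow> dterm \<Rightarrow> dterm" where
  "DMinus p q = DPlus p (DNeg q)"

fun deval :: "'d meadow \<Rightarrow> (nat \<Rightarrow> 'd) \<Rightarrow> dterm \<Rightarrow> 'd" where
  "deval D \<sigma> (DVar n) = \<sigma> n"
| "deval D \<sigma> DZero = mzero D"
| "deval D \<sigma> DOne = mone D"
| "deval D \<sigma> (DPlus p q) = madd D (deval D \<sigma> p) (deval D \<sigma> q)"
| "deval D \<sigma> (DTimes p q) = mmul D (deval D \<sigma> p) (deval D \<sigma> q)"
| "deval D \<sigma> (DNeg p) = mneg D (deval D \<sigma> p)"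
| "deval D \<sigma> (DInv p) = minv D (deval D \<sigma> p)"

definition dvalid :: "'d meadow \<Rightarrow> dterm \<Rightarrow> dterm \<Rightarrow> bool" where
  "dvalid D p q \<longleftrightarrow> (\<forall>\<sigma>. deval D \<sigma> p = deval D \<sigma> q)"

datatype 'a tterm =
    TVar nat
  | Eps
  | Delta
  | Entry 'a dterm
  | Gamma dterm
  | Oplus "'a tterm" "'a tterm"

text \<open>The axioms (T1)--(T10) are given as
  schemata (closed under substitution of arbitrary tuplix terms for tuplix variables
  and arbitrary data terms for data variables); (T10) only for attributes in A.\<close>
inductive ctc :: "'d meadow \<Rightarrow> 'a set \<Rightarrow> 'a tterm \<Rightarrow> 'a tterm \<Rightarrow> bool"
  for D :: "'d meadow" and A :: "'a set" where
  T1: "ctc D A (Oplus x y) (Oplus y x)"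
| T2: "ctc D A (Oplus (Oplus x y) z) (Oplus x (Oplus y z))"
| T3: "ctc D A (Oplus x Eps) x"
| T4: "ctc D A (Oplus x Delta) Delta"
| T5: "a \<in> A \<Longrightarrow> ctc D A (Oplus (Entry a u) (Entry a v)) (Entry a (DPlus u v))"
| T6: "ctc D A (Gamma u) (Gamma (DDiv u u))"
| T7: "ctc D A (Gamma DZero) Eps"
| T8: "ctc D A (Gamma DOne) Delta"
| T9: "ctc D A (Oplus (Gamma u) (Gamma v)) (Gamma (DPlus (DDiv u u) (DDiv v v)))"
| T10: "a \<in> A \<Longrightarrow> ctc D A (Oplus (Gamma (DMinus u v)) (Entry a u))
                                (Oplus (Gamma (DMinus u v)) (Entry a v))"
| DE: "dvalid D p q \<Longrightarrow> ctc D A (Gamma p) (Gamma q)"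
| refl: "ctc D A t t"
| sym: "ctc D A t s \<Longrightarrow> ctc D A s t"
| trans: "ctc D A t s \<Longrightarrow> ctc D A s r \<Longrightarrow> ctc D A t r"
| cong: "ctc D A t t' \<Longrightarrow> ctc D A s s' \<Longrightarrow> ctc D A (Oplus t s) (Oplus t' s')"

end

theory Submission
  imports Defs
begin

text \<open>By (T9) and (T6) both sides are \<open>\<gamma>(q/q)\<close> with \<open>q = x/x + w/w\<close>, where \<open>x\<close> is \<open>u\<close>
  resp. \<open>v\<close> and \<open>w = u - v\<close>. If \<open>u = v\<close> the two data terms agree; otherwise \<open>w/w = 1\<close>, and
  since \<open>x/x\<close> is \<open>0\<close> or \<open>1\<close>, \<open>q\<close> is \<open>1\<close> or \<open>1 + 1\<close>, so \<open>q/q = 1\<close> on both sides as long as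
  \<open>1 + 1 \<noteq> 0\<close>; rule (DE) then identifies them. In characteristic two the calculus is
  inconsistent: \<open>\<epsilon> = \<gamma>(0) = \<gamma>(1/1 + 1/1) = \<gamma>(1) \<oplus> \<gamma>(1) = \<delta> \<oplus> \<delta> = \<delta>\<close>, and then every
  equation is derivable.\<close>

lemma meadow_add_zero_left:
  assumes "is_meadow D"
  shows "madd D (mzero D) x = x"
  using assms unfolding is_meadow_def by metis

lemma meadow_mul_zero_left:
  assumes "is_meadow D"
  shows "mmul D (mzero D) x = mzero D"
proof -
  note ax = assms[unfolded is_meadow_def]
  let ?a = "mmul D x (mzero D)"
  have "?a = madd D ?a ?a"
    using ax by (metis (no_types))
  then have "madd D ?a (mneg D ?a) = madd D ?a (madd D ?a (mneg D ?a))"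
    using ax by metis
  then have "?a = mzero D"
    using ax by metis
  then show ?thesis
    using ax by metis
qed

lemma meadow_eq_if_diff_eq_zero:
  assumes "is_meadow D" and "madd D x (mneg D y) = mzero D"
  shows "x = y"
proof -
  note ax = assms(1)[unfolded is_meadow_def]
  have "x = madd D x (madd D (mneg D y) y)"
    using ax by metis
  also have "\<dots> = madd D (madd D x (mneg D y)) y"
    using ax by metis
  also have "\<dots> = y"
    using assms meadow_add_zero_left by metis
  finally show ?thesis .
qed

lemma meadow_one_div_one:
  assumes "is_meadow D"
  shows "mmul D (mone D) (minv D (mone D)) = mone D"
  using assms unfolding is_meadow_def by metis

lemma cancellation_meadow_div_self:
  assumes "nontrivial_cancellation_meadow D" and "x \<noteq> mzero D"
  shows "mmul D x (minv D x) = mone D"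
  using assms unfolding nontrivial_cancellation_meadow_def is_meadow_def by metis

lemma cancellation_meadow_div_self_add_one_nonzero:
  assumes D: "nontrivial_cancellation_meadow D"
    and two: "madd D (mone D) (mone D) \<noteq> mzero D"
  shows "madd D (mmul D x (minv D x)) (mone D) \<noteq> mzero D"
proof -
  have M: "is_meadow D" and zero_ne_one: "mzero D \<noteq> mone D"
    using D unfolding nontrivial_cancellation_meadow_def by blast+
  show ?thesis
  proof (cases "x = mzero D")
    case True
    then show ?thesis
      using zero_ne_one meadow_mul_zero_left[OF M] meadow_add_zero_left[OF M] by metis
  next
    case False
    then show ?thesis
      using two cancellation_meadow_div_self[OF D] by metis
  qed
qed

declare ctc.trans [trans]

lemma ctc_Oplus_Gamma:
  "ctc D A (Oplus (Gamma p) (Gamma q))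
     (Gamma (DDiv (DPlus (DDiv p p) (DDiv q q)) (DPlus (DDiv p p) (DDiv q q))))"
  by (meson ctc.T9 ctc.T6 ctc.trans)

lemma ctc_all_if_Eps_Delta:
  assumes "ctc D A Eps Delta"
  shows "ctc D A t s"
proof -
  have collapse: "ctc D A r Delta" for r
  proof -
    have "ctc D A r (Oplus r Eps)" by (rule ctc.sym, rule ctc.T3)
    also have "ctc D A \<dots> (Oplus r Delta)" by (rule ctc.cong[OF ctc.refl assms])
    also have "ctc D A \<dots> Delta" by (rule ctc.T4)
    finally show ?thesis .
  qed
  show ?thesis
    using collapse[of t] collapse[of s] by (meson ctc.sym ctc.trans)
qed

lemma ctc_Eps_Delta_if_char_two:
  assumes "is_meadow D" and "madd D (mone D) (mone D) = mzero D"
  shows "ctc D A Eps Delta"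
proof -
  have "ctc D A Eps (Gamma DZero)" by (rule ctc.sym, rule ctc.T7)
  also have "ctc D A \<dots> (Gamma (DPlus (DDiv DOne DOne) (DDiv DOne DOne)))"
    using assms meadow_one_div_one[OF assms(1)]
    by (intro ctc.DE) (simp add: dvalid_def DDiv_def)
  also have "ctc D A \<dots> (Oplus (Gamma DOne) (Gamma DOne))" by (rule ctc.sym, rule ctc.T9)
  also have "ctc D A \<dots> (Oplus Delta Delta)" by (rule ctc.cong[OF ctc.T8 ctc.T8])
  also have "ctc D A \<dots> Delta" by (rule ctc.T4)
  finally show ?thesis .
qed

lemma dvalid_normalized_sum_with_difference:
  assumes D: "nontrivial_cancellation_meadow D"
    and two: "madd D (mone D) (mone D) \<noteq> mzero D"
  fixes p r :: dterm
  defines "w \<equiv> DMinus p r"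
  shows "dvalid D
           (DDiv (DPlus (DDiv p p) (DDiv w w)) (DPlus (DDiv p p) (DDiv w w)))
           (DDiv (DPlus (DDiv r r) (DDiv w w)) (DPlus (DDiv r r) (DDiv w w)))"
  unfolding dvalid_def
proof
  fix \<sigma>
  show "deval D \<sigma> (DDiv (DPlus (DDiv p p) (DDiv w w)) (DPlus (DDiv p p) (DDiv w w))) =
        deval D \<sigma> (DDiv (DPlus (DDiv r r) (DDiv w w)) (DPlus (DDiv r r) (DDiv w w)))"
  proof (cases "deval D \<sigma> p = deval D \<sigma> r")
    case True
    then show ?thesis by (simp add: DDiv_def)
  next
    case False
    have M: "is_meadow D"
      using D unfolding nontrivial_cancellation_meadow_def by blast
    have "madd D (deval D \<sigma> p) (mneg D (deval D \<sigma> r)) \<noteq> mzero D"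
      using False meadow_eq_if_diff_eq_zero[OF M] by blast
    then have "deval D \<sigma> (DDiv w w) = mone D"
      unfolding w_def by (simp add: DDiv_def DMinus_def cancellation_meadow_div_self[OF D])
    then show ?thesis
      using cancellation_meadow_div_self[OF D cancellation_meadow_div_self_add_one_nonzero[OF D two]]
      by (simp add: DDiv_def)
  qed
qed

theorem lemma3:
  fixes D :: "'d meadow" and A :: "'a set" and u v :: nat
  assumes "nontrivial_cancellation_meadow D"
    and "A \<noteq> {}"
  shows "ctc D A (Oplus (Gamma (DVar u)) (Gamma (DMinus (DVar u) (DVar v))))
                 (Oplus (Gamma (DVar v)) (Gamma (DMinus (DVar u) (DVar v))))"
proof (cases "madd D (mone D) (mone D) = mzero D")
  case True
  have "is_meadow D"
    using assms(1) unfolding nontrivial_cancellation_meadow_def by blast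
  then show ?thesis
    using ctc_all_if_Eps_Delta ctc_Eps_Delta_if_char_two True by blast
next
  case False
  then show ?thesis
    using ctc_Oplus_Gamma ctc.DE[OF dvalid_normalized_sum_with_difference[OF assms(1) False]]
    by (meson ctc.sym ctc.trans)
qed

end
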